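(* Let $\varphi$ be a finite conjunction of literals of the two forms $x\in y$ and $x = y\setminus z$ (with $x,y,z$ set variables), with finite set of variables $\mathrm{Vars}(\varphi)$, and let $\bar n=|\mathrm{Vars}(\varphi)|$. Let $M$ be a set assignment over $\mathrm{Vars}(\varphi)$ satisfying $\varphi$; let $\bar x,\bar y\in\mathrm{Vars}(\varphi)$, let $\overline{M}$ be a set assignment over $\mathrm{Vars}(\varphi)$ satisfying $\varphi$ with $\overline{M}\bar x\neq \overline{M}\bar y$, and let $\mathfrak{t}$ be a set belonging to exactly one of $\overline{M}\bar x$, $\overline{M}\bar y$. Fix a set $\mathfrak{s}$ with $\mathrm{rk}(\mathfrak{s})>\mathrm{rk}(M)$. Define $\mathsf{V}_0=\{u\in\mathrm{Vars}(\varphi)\mid \mathfrak{t}\in\overline{M}u\}$; $\mathsf{V}_n=\{u\in\mathrm{Vars}(\varphi)\mid Mu\cap\{Mw\mid w\in\mathsf{V}_{n-1}\}\neq\emptyset\}$ for $n\ge1$; $M_0v=Mv\cup\{\mathfrak{s}\}$ if $v\in\mathsf{V}_0$ and $M_0v=Mv$ otherwise; for $n\ge1$, $M_nv=M_{n-1}v\cup\{M_{n-1}u\mid u\in\mathsf{V}_{n-1},\ Mu\in Mv\}$ if $v\in\mathsf{V}_n$ and $M_nv=M_{n-1}v$ otherwise. Then the set assignment $M_{\bar n}$ satisfies $\varphi$.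
   Context: A set assignment is a map from a finite set of set variables into the von Neumann universe $\mathcal{V}=\bigcup_\alpha\mathcal{V}_\alpha$, $\mathcal{V}_\alpha=\bigcup_{\beta<\alpha}\mathcal{P}(\mathcal{V}_\beta)$; it satisfies $x\in y$ iff $Mx\in My$ and $x=y\setminus z$ iff $Mx=My\setminus Mz$, and satisfies a conjunction iff it satisfies each conjunct. The rank $\mathrm{rk}(s)$ of a set $s$ is the least ordinal $\alpha$ with $s\subseteq\mathcal{V}_\alpha$, and $\mathrm{rk}(M)=\max\{\mathrm{rk}(Mx)\mid x\in\mathrm{dom}(M)\}$. *)

theory Defs
  imports Main
begin

text \<open>
  An abstract universe of sets: a type 'u whose elements are sets, given by the
  membership function elts (x is the set elts x of its members).  We require
  extensionality (elts injective), well-foundedness of membership (foundation),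
  and closure of sets under adjoining finitely many elements (so that the sets
  M_n v of the lemma exist).  The von Neumann universe satisfies all of this.
\<close>

definition set_universe :: "('u \<Rightarrow> 'u set) \<Rightarrow> bool" where
  "set_universe elts \<longleftrightarrow>
     inj elts \<and>
     wf {(a, b). a \<in> elts b} \<and>
     (\<forall>x F. finite F \<longrightarrow> (\<exists>z. elts z = elts x \<union> F))"

text \<open>The set with members S (used only for sets that exist).\<close>
definition mkset :: "('u \<Rightarrow> 'u set) \<Rightarrow> 'u set \<Rightarrow> 'u" where
  "mkset elts S = inv elts S"

text \<open>Rank comparison: rk(x) \<le> rk(y).  Since rk(x) = sup{rk(a)+1 | a \<in> x},
  rk(x) \<le> rk(y) iff every member a of x has rk(a) \<le> rk(b) for some member b of y.\<close>
inductive rank_le :: "('u \<Rightarrow> 'u set) \<Rightarrow> 'u \<Rightarrow> 'u \<Rightarrow> bool" for elts where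
  "(\<forall>a \<in> elts x. \<exists>b \<in> elts y. rank_le elts a b) \<Longrightarrow> rank_le elts x y"

definition rank_lt :: "('u \<Rightarrow> 'u set) \<Rightarrow> 'u \<Rightarrow> 'u \<Rightarrow> bool" where
  "rank_lt elts x y \<longleftrightarrow> \<not> rank_le elts y x"

datatype 'v lit = Mem 'v 'v | Diff 'v 'v 'v

fun lit_vars :: "'v lit \<Rightarrow> 'v set" where
  "lit_vars (Mem x y) = {x, y}"
| "lit_vars (Diff x y z) = {x, y, z}"

definition Vars :: "'v lit list \<Rightarrow> 'v set" where
  "Vars \<phi> = (\<Union>l \<in> set \<phi>. lit_vars l)"

fun lit_sat :: "('u \<Rightarrow> 'u set) \<Rightarrow> ('v \<Rightarrow> 'u) \<Rightarrow> 'v lit \<Rightarrow> bool" where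
  "lit_sat elts M (Mem x y) \<longleftrightarrow> M x \<in> elts (M y)"
| "lit_sat elts M (Diff x y z) \<longleftrightarrow> elts (M x) = elts (M y) - elts (M z)"

definition sat :: "('u \<Rightarrow> 'u set) \<Rightarrow> ('v \<Rightarrow> 'u) \<Rightarrow> 'v lit list \<Rightarrow> bool" where
  "sat elts M \<phi> \<longleftrightarrow> (\<forall>l \<in> set \<phi>. lit_sat elts M l)"

primrec Vseq :: "('u \<Rightarrow> 'u set) \<Rightarrow> 'v lit list \<Rightarrow> ('v \<Rightarrow> 'u) \<Rightarrow> ('v \<Rightarrow> 'u) \<Rightarrow> 'u \<Rightarrow> nat \<Rightarrow> 'v set" where
  "Vseq elts \<phi> M Mb t 0 = {u \<in> Vars \<phi>. t \<in> elts (Mb u)}"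
| "Vseq elts \<phi> M Mb t (Suc n) =
     {u \<in> Vars \<phi>. elts (M u) \<inter> (M ` Vseq elts \<phi> M Mb t n) \<noteq> {}}"

primrec Mseq :: "('u \<Rightarrow> 'u set) \<Rightarrow> 'v lit list \<Rightarrow> ('v \<Rightarrow> 'u) \<Rightarrow> ('v \<Rightarrow> 'u) \<Rightarrow> 'u \<Rightarrow> 'u \<Rightarrow> nat \<Rightarrow> 'v \<Rightarrow> 'u" where
  "Mseq elts \<phi> M Mb t s 0 = (\<lambda>v.
     if v \<in> Vseq elts \<phi> M Mb t 0 then mkset elts (elts (M v) \<union> {s}) else M v)"
| "Mseq elts \<phi> M Mb t s (Suc n) = (\<lambda>v.
     if v \<in> Vseq elts \<phi> M Mb t (Suc n)
     then mkset elts (elts (Mseq elts \<phi> M Mb t s n v) \<union>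
            {Mseq elts \<phi> M Mb t s n u | u. u \<in> Vseq elts \<phi> M Mb t n \<and> M u \<in> elts (M v)})
     else Mseq elts \<phi> M Mb t s n v)"

end

theory Submission
  imports Defs
begin

(*
  Every set added by the construction has s in its transitive closure, whereas, since
  rk(s) > rk(M), no member of an original value M v does.  So M v is recovered from
  M_k v by discarding s and everything above s.  Consequently a new element M_j u
  determines M u, it belongs to M_k v exactly when M u \<in> M v, and s belongs to M_k v
  exactly when t \<in> Mb v.  Each of these three disjoint layers respects x = y \ z,
  by the corresponding literal for M or for Mb.  A literal x \<in> y survives until the
  last stage because V_n is empty from n = |Vars \<phi>| on: u \<in> V_n yields a membership
  chain of n + 1 distinct values of M ending in M u.
*)

lemma mkset_elts:
  assumes "set_universe elts" "finite F"
  shows "elts (mkset elts (elts x \<union> F)) = elts x \<union> F"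
proof -
  have "elts x \<union> F \<in> range elts"
    using assms unfolding set_universe_def by (metis rangeI)
  then show ?thesis unfolding mkset_def by (simp add: f_inv_into_f)
qed

lemma rank_le_into_mem: "rank_le elts a b \<Longrightarrow> b \<in> elts c \<Longrightarrow> rank_le elts a c"
proof (induction a b arbitrary: c rule: rank_le.induct)
  case (1 x y)
  then show ?case by (blast intro: rank_le.intros)
qed

lemma rank_le_refl:
  assumes "wf {(a, b). a \<in> elts b}"
  shows "rank_le elts a a"
  using assms
proof (induction a rule: wf_induct_rule)
  case (less a)
  then show ?case by (blast intro: rank_le.intros rank_le_into_mem)
qed

lemma rtrancl_mem_rank_le:
  assumes "wf {(a, b). a \<in> elts b}" "(a, b) \<in> {(a, b). a \<in> elts b}\<^sup>*"
  shows "rank_le elts a b"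
  using assms(2)
proof (induction rule: rtrancl_induct)
  case base
  show ?case using assms(1) by (rule rank_le_refl)
next
  case (step b c)
  from step.IH step.hyps(2) show ?case by (simp add: rank_le_into_mem)
qed

lemma acyclic_below_psubset:
  assumes "acyclic r" "(a, c) \<in> r" "c \<in> S"
  shows "{b \<in> S. (b, a) \<in> r\<^sup>*} \<subset> {b \<in> S. (b, c) \<in> r\<^sup>*}"
proof -
  have "(c, a) \<notin> r\<^sup>*"
    using assms(1,2) rtrancl_into_trancl1[of c a r c] unfolding acyclic_def by blast
  moreover have "(b, c) \<in> r\<^sup>*" if "(b, a) \<in> r\<^sup>*" for b
    using that assms(2) by (rule rtrancl_into_rtrancl)
  ultimately show ?thesis using assms(3) by blast
qed

lemma Un_Diff_disjoint_layers:
  assumes "A1 = A2 - A3" "B1 = B2 - B3" "C1 = C2 - C3"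
    and "A2 \<inter> (B3 \<union> C3) = {}" "A3 \<inter> (B2 \<union> C2) = {}" "B2 \<inter> C3 = {}" "B3 \<inter> C2 = {}"
  shows "A1 \<union> B1 \<union> C1 = (A2 \<union> B2 \<union> C2) - (A3 \<union> B3 \<union> C3)"
  using assms by blast

lemma finite_Vars: "finite (Vars \<phi>)"
proof -
  have "finite (lit_vars l)" for l :: "'v lit" by (cases l) auto
  then show ?thesis unfolding Vars_def by auto
qed

lemma Vseq_subset_Vars: "Vseq elts \<phi> M Mb t n \<subseteq> Vars \<phi>"
  by (cases n) auto

locale Mseq_construction =
  fixes elts :: "'u \<Rightarrow> 'u set" and \<phi> :: "'v lit list"
    and M Mb :: "'v \<Rightarrow> 'u" and t s :: 'u
  assumes universe: "set_universe elts"
    and rank_below_s: "\<forall>v \<in> Vars \<phi>. rank_lt elts (M v) s"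
begin

abbreviation "V \<equiv> Vseq elts \<phi> M Mb t"
abbreviation "Ms \<equiv> Mseq elts \<phi> M Mb t s"
abbreviation "R \<equiv> {(a, b). a \<in> elts b}"

lemma Vseq_in_Vars: "u \<in> V j \<Longrightarrow> u \<in> Vars \<phi>"
  using Vseq_subset_Vars[of elts \<phi> M Mb t j] by blast

lemma wf_R: "wf R"
  using universe unfolding set_universe_def by blast

definition Mseq_new :: "nat \<Rightarrow> 'v \<Rightarrow> 'u set" where
  "Mseq_new k v = {Ms j u | j u. j < k \<and> u \<in> V j \<and> M u \<in> elts (M v)}"

lemma Mseq_elts:
  assumes v: "v \<in> Vars \<phi>"
  shows "elts (Ms k v) = elts (M v) \<union> (if v \<in> V 0 then {s} else {}) \<union> Mseq_new k v"
  unfolding Mseq_new_def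
proof (induction k)
  case 0
  show ?case using mkset_elts[OF universe, of "{s}" "M v"] by auto
next
  case (Suc k)
  define A where "A = {Ms k u | u. u \<in> V k \<and> M u \<in> elts (M v)}"
  have "A \<subseteq> Ms k ` Vars \<phi>"
    unfolding A_def using Vseq_subset_Vars[of elts \<phi> M Mb t k] by blast
  then have "finite A" using finite_Vars finite_subset by blast
  have new: "{Ms j u | j u. j < Suc k \<and> u \<in> V j \<and> M u \<in> elts (M v)} =
      {Ms j u | j u. j < k \<and> u \<in> V j \<and> M u \<in> elts (M v)} \<union> A"
    unfolding A_def using less_Suc_eq by auto
  show ?case
  proof (cases "v \<in> V (Suc k)")
    case True
    then have "Ms (Suc k) v = mkset elts (elts (Ms k v) \<union> A)"
      unfolding A_def by (simp only: Mseq.simps if_True)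
    then have "elts (Ms (Suc k) v) = elts (Ms k v) \<union> A"
      using mkset_elts[OF universe \<open>finite A\<close>] by simp
    then show ?thesis unfolding Suc.IH new by blast
  next
    case False
    then have "A = {}" unfolding A_def using v by auto
    moreover have "Ms (Suc k) v = Ms k v"
      using False by (simp only: Mseq.simps if_False)
    ultimately show ?thesis using Suc.IH unfolding new by (simp del: Mseq.simps)
  qed
qed

lemma s_trancl_Mseq: "u \<in> V j \<Longrightarrow> (s, Ms j u) \<in> R\<^sup>+"
proof (induction j arbitrary: u)
  case 0
  then have "s \<in> elts (Ms 0 u)"
    using Mseq_elts[OF Vseq_in_Vars[OF "0"], of 0] by (simp del: Mseq.simps Vseq.simps)
  then show ?case by auto
next
  case (Suc j)
  then obtain w where w: "w \<in> V j" "M w \<in> elts (M u)" by auto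
  then have "(Ms j w, Ms (Suc j) u) \<in> R"
    using Mseq_elts[OF Vseq_in_Vars[OF Suc.prems], of "Suc j"] unfolding Mseq_new_def by blast
  with Suc.IH[OF w(1)] show ?case by (rule trancl_into_trancl)
qed

lemma not_rtrancl_s_mem_M:
  assumes "v \<in> Vars \<phi>" "e \<in> elts (M v)"
  shows "(s, e) \<notin> R\<^sup>*"
proof
  assume "(s, e) \<in> R\<^sup>*"
  moreover have "(e, M v) \<in> R" using assms(2) by simp
  ultimately have "(s, M v) \<in> R\<^sup>*" by (rule rtrancl_into_rtrancl)
  then have "rank_le elts s (M v)" by (rule rtrancl_mem_rank_le[OF wf_R])
  then show False using rank_below_s assms(1) unfolding rank_lt_def by blast
qed

lemma s_notin_M: "v \<in> Vars \<phi> \<Longrightarrow> s \<notin> elts (M v)"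
  using not_rtrancl_s_mem_M by blast

lemma s_notin_Mseq_new: "s \<notin> Mseq_new k v"
proof
  assume "s \<in> Mseq_new k v"
  then obtain j u where u: "u \<in> V j" and s_eq: "s = Ms j u" unfolding Mseq_new_def by blast
  have "(s, s) \<in> R\<^sup>+" using s_trancl_Mseq[OF u, folded s_eq] .
  then show False using wf_acyclic[OF wf_R] unfolding acyclic_def by blast
qed

lemma M_Int_Mseq_new: "v \<in> Vars \<phi> \<Longrightarrow> elts (M v) \<inter> Mseq_new k w = {}"
  unfolding Mseq_new_def using not_rtrancl_s_mem_M s_trancl_Mseq[THEN trancl_into_rtrancl]
  by blast

lemma elts_M_eq:
  assumes "v \<in> Vars \<phi>"
  shows "elts (M v) = {e \<in> elts (Ms k v). (s, e) \<notin> R\<^sup>*}"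
  using assms Mseq_elts[OF assms, of k] not_rtrancl_s_mem_M[OF assms]
    s_trancl_Mseq[THEN trancl_into_rtrancl]
  unfolding Mseq_new_def by auto

lemma Mseq_eq_imp_M_eq:
  assumes "u \<in> Vars \<phi>" "u' \<in> Vars \<phi>" "Ms j u = Ms j' u'"
  shows "M u = M u'"
proof -
  have "elts (M u) = elts (M u')"
    unfolding elts_M_eq[OF assms(1), of j] elts_M_eq[OF assms(2), of j'] assms(3) ..
  then show ?thesis using universe unfolding set_universe_def by (simp add: inj_eq)
qed

lemma Vseq_depth_bound: "u \<in> V n \<Longrightarrow> n < card {b \<in> M ` Vars \<phi>. (b, M u) \<in> R\<^sup>*}"
proof (induction n arbitrary: u)
  case 0
  have "M u \<in> {b \<in> M ` Vars \<phi>. (b, M u) \<in> R\<^sup>*}"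
    using Vseq_in_Vars[OF "0.prems"] by blast
  moreover have "finite {b \<in> M ` Vars \<phi>. (b, M u) \<in> R\<^sup>*}"
    by (rule finite_subset[OF _ finite_imageI[OF finite_Vars]]) blast
  ultimately show ?case using card_gt_0_iff by blast
next
  case (Suc n)
  have u: "u \<in> Vars \<phi>" using Suc.prems by (rule Vseq_in_Vars)
  from Suc.prems obtain w where w: "w \<in> V n" "M w \<in> elts (M u)" by auto
  have "{b \<in> M ` Vars \<phi>. (b, M w) \<in> R\<^sup>*} \<subset> {b \<in> M ` Vars \<phi>. (b, M u) \<in> R\<^sup>*}"
    by (rule acyclic_below_psubset) (use wf_acyclic[OF wf_R] w u in auto)
  moreover have "finite {b \<in> M ` Vars \<phi>. (b, M u) \<in> R\<^sup>*}"
    by (rule finite_subset[OF _ finite_imageI[OF finite_Vars]]) blast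
  ultimately have "card {b \<in> M ` Vars \<phi>. (b, M w) \<in> R\<^sup>*} < card {b \<in> M ` Vars \<phi>. (b, M u) \<in> R\<^sup>*}"
    by (rule psubset_card_mono[rotated])
  then show ?case using Suc.IH[OF w(1)] by linarith
qed

lemma Vseq_card_Vars_empty: "V (card (Vars \<phi>)) = {}"
proof -
  have "card {b \<in> M ` Vars \<phi>. (b, M u) \<in> R\<^sup>*} \<le> card (Vars \<phi>)" for u
  proof -
    have "card {b \<in> M ` Vars \<phi>. (b, M u) \<in> R\<^sup>*} \<le> card (M ` Vars \<phi>)"
      using finite_Vars by (intro card_mono) auto
    also have "\<dots> \<le> card (Vars \<phi>)" using finite_Vars by (rule card_image_le)
    finally show ?thesis .
  qed
  then show ?thesis using Vseq_depth_bound leD by blast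
qed

lemma Mseq_cases: "Ms k x = M x \<or> (\<exists>j \<le> k. x \<in> V j \<and> Ms k x = Ms j x)"
proof (induction k)
  case 0
  show ?case by (cases "x \<in> V 0") auto
next
  case (Suc k)
  then show ?case by (cases "x \<in> V (Suc k)") (auto simp del: Vseq.simps intro: le_SucI)
qed

lemma Mseq_new_Diff:
  assumes M_Diff: "elts (M x) = elts (M y) - elts (M z)"
  shows "Mseq_new k x = Mseq_new k y - Mseq_new k z"
proof (intro set_eqI iffI)
  fix e assume "e \<in> Mseq_new k y - Mseq_new k z"
  then show "e \<in> Mseq_new k x" unfolding Mseq_new_def M_Diff by blast
next
  fix e assume "e \<in> Mseq_new k x"
  then obtain j u where e: "e = Ms j u" "j < k" "u \<in> V j" "M u \<in> elts (M x)"
    unfolding Mseq_new_def by blast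
  have "e \<notin> Mseq_new k z"
  proof
    assume "e \<in> Mseq_new k z"
    then obtain j' u' where "Ms j u = Ms j' u'" "u' \<in> V j'" "M u' \<in> elts (M z)"
      unfolding Mseq_new_def e(1) by blast
    with e(3) have "M u \<in> elts (M z)" using Mseq_eq_imp_M_eq Vseq_in_Vars by metis
    with e(4) show False unfolding M_Diff by blast
  qed
  moreover have "e \<in> Mseq_new k y" using e unfolding Mseq_new_def M_Diff by blast
  ultimately show "e \<in> Mseq_new k y - Mseq_new k z" by blast
qed

lemma Mseq_Diff:
  assumes vars: "x \<in> Vars \<phi>" "y \<in> Vars \<phi>" "z \<in> Vars \<phi>"
    and M_Diff: "elts (M x) = elts (M y) - elts (M z)"
    and Mb_Diff: "elts (Mb x) = elts (Mb y) - elts (Mb z)"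
  shows "elts (Ms k x) = elts (Ms k y) - elts (Ms k z)"
proof -
  define S where "S v = (if v \<in> V 0 then {s} else {})" for v
  have layers: "elts (Ms k v) = elts (M v) \<union> S v \<union> Mseq_new k v" if "v \<in> Vars \<phi>" for v
    unfolding S_def using Mseq_elts[OF that] .
  have "S x = S y - S z"
    using vars Mb_Diff unfolding S_def by auto
  moreover have "elts (M v) \<inter> (S w \<union> Mseq_new k w) = {}" if "v \<in> Vars \<phi>" for v w
    using s_notin_M[OF that] M_Int_Mseq_new[OF that] unfolding S_def by auto
  moreover have "S v \<inter> Mseq_new k w = {}" for v w
    using s_notin_Mseq_new unfolding S_def by auto
  ultimately show ?thesis
    unfolding layers[OF vars(1)] layers[OF vars(2)] layers[OF vars(3)]
    using M_Diff Mseq_new_Diff[OF M_Diff] vars by (intro Un_Diff_disjoint_layers) auto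
qed

lemma Mseq_Mem:
  assumes vars: "x \<in> Vars \<phi>" "y \<in> Vars \<phi>" and M_Mem: "M x \<in> elts (M y)"
  shows "Ms (card (Vars \<phi>)) x \<in> elts (Ms (card (Vars \<phi>)) y)"
  using Mseq_cases[of "card (Vars \<phi>)" x]
proof
  assume "Ms (card (Vars \<phi>)) x = M x"
  then show ?thesis using Mseq_elts[OF vars(2)] M_Mem by auto
next
  assume "\<exists>j \<le> card (Vars \<phi>). x \<in> V j \<and> Ms (card (Vars \<phi>)) x = Ms j x"
  then obtain j where "j < card (Vars \<phi>)" "x \<in> V j" "Ms (card (Vars \<phi>)) x = Ms j x"
    using Vseq_card_Vars_empty by (metis empty_iff le_neq_implies_less)
  then show ?thesis using Mseq_elts[OF vars(2)] M_Mem unfolding Mseq_new_def by auto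
qed

end

theorem lemma10:
  fixes elts :: "'u \<Rightarrow> 'u set" and \<phi> :: "'v lit list"
    and M Mb :: "'v \<Rightarrow> 'u" and xb yb :: 'v and t s :: 'u
  assumes "set_universe elts"
    and "sat elts M \<phi>"
    and "xb \<in> Vars \<phi>" and "yb \<in> Vars \<phi>"
    and "sat elts Mb \<phi>" and "Mb xb \<noteq> Mb yb"
    and "(t \<in> elts (Mb xb)) \<noteq> (t \<in> elts (Mb yb))"
    and "\<forall>v \<in> Vars \<phi>. rank_lt elts (M v) s"
  shows "sat elts (Mseq elts \<phi> M Mb t s (card (Vars \<phi>))) \<phi>"
  unfolding sat_def
proof
  interpret Mseq_construction elts \<phi> M Mb t s
    using assms(1,8) by unfold_locales
  fix l assume l: "l \<in> set \<phi>"
  then have vars: "lit_vars l \<subseteq> Vars \<phi>" unfolding Vars_def by blast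
  have M_l: "lit_sat elts M l" and Mb_l: "lit_sat elts Mb l"
    using assms(2,5) l unfolding sat_def by blast+
  show "lit_sat elts (Ms (card (Vars \<phi>))) l"
  proof (cases l)
    case (Mem x y)
    then show ?thesis using vars M_l Mseq_Mem[of x y] by simp
  next
    case (Diff x y z)
    then show ?thesis using vars M_l Mb_l Mseq_Diff[of x y z] by simp
  qed
qed

end
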